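(* Let $G$ be a connected graph of girth at least $6$ that has exactly two vertices $x,y$ of type $2$ and no vertex of type $k$ for any $k\geq 3$. Then $G$ is almost well-covered if and only if $x$ and $y$ are adjacent and one of the following two conditions holds: (1) $V(G_0)=\emptyset$; (2) $G_0\cong K_2$, neither $x$ nor $y$ has a neighbor in $G_0$, and the two vertices of $G_0$ both have degree $2$ in $G$ and are contained in an induced $6$-cycle of $G$ that contains $x$ and $y$.
   Context: All graphs are finite and simple. The girth of a graph is the length of a shortest cycle (infinite for acyclic graphs). For a graph $G$, $\alpha(G)$ is the maximum size of an independent set and $i(G)$ is the minimum size of an inclusion-maximal independent set. $G$ is almost well-covered if $\alpha(G)-i(G)=1$. Types of vertices: let $U$ be the set of vertices of $G$ whose connected component in $G$ is a complete graph. In $G-U$, vertices of degree $1$ are called leaves and the other vertices are called internal vertices. An internal vertex adjacent to exactly $k$ leaves is said to be of type $k$; in addition, every vertex of $U$ is of type $0$ (leaves of $G-U$ have no type). $G_i$ denotes the subgraph of $G$ induced by all vertices of type $i$. *)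

theory Defs
  imports Main "HOL-Library.Extended_Nat"
begin

definition graph :: "'a set \<Rightarrow> ('a \<Rightarrow> 'a \<Rightarrow> bool) \<Rightarrow> bool" where
  "graph V E \<longleftrightarrow> finite V \<and> (\<forall>u v. E u v \<longrightarrow> u \<in> V \<and> v \<in> V)
     \<and> (\<forall>u v. E u v \<longrightarrow> E v u) \<and> (\<forall>v. \<not> E v v)"

definition connected_graph :: "'a set \<Rightarrow> ('a \<Rightarrow> 'a \<Rightarrow> bool) \<Rightarrow> bool" where
  "connected_graph V E \<longleftrightarrow> V \<noteq> {} \<and> (\<forall>u\<in>V. \<forall>v\<in>V. E\<^sup>*\<^sup>* u v)"

definition degree :: "'a set \<Rightarrow> ('a \<Rightarrow> 'a \<Rightarrow> bool) \<Rightarrow> 'a \<Rightarrow> nat" where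
  "degree V E v = card {u \<in> V. E v u}"

definition induced :: "'a set \<Rightarrow> ('a \<Rightarrow> 'a \<Rightarrow> bool) \<Rightarrow> ('a \<Rightarrow> 'a \<Rightarrow> bool)" where
  "induced S E = (\<lambda>u v. u \<in> S \<and> v \<in> S \<and> E u v)"

definition is_cycle :: "'a set \<Rightarrow> ('a \<Rightarrow> 'a \<Rightarrow> bool) \<Rightarrow> 'a list \<Rightarrow> bool" where
  "is_cycle V E cs \<longleftrightarrow> length cs \<ge> 3 \<and> distinct cs \<and> set cs \<subseteq> V
     \<and> (\<forall>i < length cs. E (cs ! i) (cs ! ((i + 1) mod length cs)))"

definition is_induced_cycle :: "'a set \<Rightarrow> ('a \<Rightarrow> 'a \<Rightarrow> bool) \<Rightarrow> 'a list \<Rightarrow> bool" where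
  "is_induced_cycle V E cs \<longleftrightarrow> is_cycle V E cs \<and>
     (\<forall>i < length cs. \<forall>j < length cs. E (cs ! i) (cs ! j) \<longrightarrow>
        j = (i + 1) mod length cs \<or> i = (j + 1) mod length cs)"

text \<open>Girth: length of a shortest cycle, infinite if acyclic.\<close>
definition girth :: "'a set \<Rightarrow> ('a \<Rightarrow> 'a \<Rightarrow> bool) \<Rightarrow> enat" where
  "girth V E = Inf {enat (length cs) | cs. is_cycle V E cs}"

definition independent :: "'a set \<Rightarrow> ('a \<Rightarrow> 'a \<Rightarrow> bool) \<Rightarrow> 'a set \<Rightarrow> bool" where
  "independent V E S \<longleftrightarrow> S \<subseteq> V \<and> (\<forall>u\<in>S. \<forall>v\<in>S. \<not> E u v)"

definition maximal_independent :: "'a set \<Rightarrow> ('a \<Rightarrow> 'a \<Rightarrow> bool) \<Rightarrow> 'a set \<Rightarrow> bool" where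
  "maximal_independent V E S \<longleftrightarrow> independent V E S \<and>
     (\<forall>T. independent V E T \<and> S \<subseteq> T \<longrightarrow> T = S)"

definition alpha :: "'a set \<Rightarrow> ('a \<Rightarrow> 'a \<Rightarrow> bool) \<Rightarrow> nat" where
  "alpha V E = Max {card S | S. independent V E S}"

definition indep_dom :: "'a set \<Rightarrow> ('a \<Rightarrow> 'a \<Rightarrow> bool) \<Rightarrow> nat" where
  "indep_dom V E = Min {card S | S. maximal_independent V E S}"

definition almost_well_covered :: "'a set \<Rightarrow> ('a \<Rightarrow> 'a \<Rightarrow> bool) \<Rightarrow> bool" where
  "almost_well_covered V E \<longleftrightarrow> int (alpha V E) - int (indep_dom V E) = 1"

text \<open>U: vertices whose connected component is complete.\<close>
definition complete_comp_vertices :: "'a set \<Rightarrow> ('a \<Rightarrow> 'a \<Rightarrow> bool) \<Rightarrow> 'a set" where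
  "complete_comp_vertices V E = {v \<in> V. \<forall>a b. E\<^sup>*\<^sup>* v a \<and> E\<^sup>*\<^sup>* v b \<and> a \<noteq> b \<longrightarrow> E a b}"

definition leaves :: "'a set \<Rightarrow> ('a \<Rightarrow> 'a \<Rightarrow> bool) \<Rightarrow> 'a set" where
  "leaves V E = (let W = V - complete_comp_vertices V E in
     {v \<in> W. degree W (induced W E) v = 1})"

definition internal_vertices :: "'a set \<Rightarrow> ('a \<Rightarrow> 'a \<Rightarrow> bool) \<Rightarrow> 'a set" where
  "internal_vertices V E = (V - complete_comp_vertices V E) - leaves V E"

definition has_type :: "'a set \<Rightarrow> ('a \<Rightarrow> 'a \<Rightarrow> bool) \<Rightarrow> 'a \<Rightarrow> nat \<Rightarrow> bool" where
  "has_type V E v k \<longleftrightarrow>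
     (v \<in> complete_comp_vertices V E \<and> k = 0) \<or>
     (v \<in> internal_vertices V E \<and> card {u \<in> leaves V E. E v u} = k)"

definition type_vertices :: "'a set \<Rightarrow> ('a \<Rightarrow> 'a \<Rightarrow> bool) \<Rightarrow> nat \<Rightarrow> 'a set" where
  "type_vertices V E k = {v \<in> V. has_type V E v k}"

end

theory Submission
  imports Defs
begin

(* Since x carries two leaves, no component of G is complete; so the leaves are just the vertices
   of degree one, and every internal vertex outside G_0 supports exactly one leaf, except x and y,
   which support two. Trading the support vertices in an independent set S against the leaves
   outside S gives alpha(G) = |L| + alpha(G_0), and for maximal S
     |S| = |L| + |S \<inter> V(G_0)| - [x \<in> S] - [y \<in> S].
   Hence, in an almost well-covered G, an independent M \<subseteq> V(G_0) - S without neighbours in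
   S \<inter> V(G_0) has at most 1 - [x \<in> S] - [y \<in> S] elements. Extending cleverly chosen independent
   sets to maximal ones, and using girth at least 6 to keep them independent, this forces x ~ y
   and shows that a nonempty G_0 is a single edge qu with N(q) = {u, p}, N(u) = {q, z}, where p and
   z are attached to the two type-2 vertices: q u z x y p (or q u z y x p) is an induced 6-cycle.
   Conversely, in these configurations every maximal independent set has at least alpha(G) - 1
   elements, and one containing x has exactly that many. *)

lemma rtranclp_exit_avoiding:
  assumes "R\<^sup>*\<^sup>* h t" "h \<in> H - A" "t \<notin> H" "\<forall>a\<in>A. \<forall>b\<in>H. R b a \<longrightarrow> b \<in> A"
  shows "\<exists>q\<in>H - A. \<exists>p. p \<notin> H \<and> R q p"
  using assms
proof (induction rule: converse_rtranclp_induct)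
  case base
  then show ?case by auto
next
  case (step h b)
  show ?case
  proof (cases "b \<in> H")
    case True
    with step have "b \<notin> A" by blast
    with True step show ?thesis by blast
  qed (use step in blast)
qed

locale fin_graph =
  fixes V :: "'a set" and E :: "'a \<Rightarrow> 'a \<Rightarrow> bool"
  assumes is_graph: "graph V E"
begin

lemma finite_V: "finite V"
  using is_graph unfolding graph_def by auto

lemma adj_in_V: "E u v \<Longrightarrow> u \<in> V \<and> v \<in> V"
  using is_graph unfolding graph_def by auto

lemma adj_sym: "E u v \<Longrightarrow> E v u"
  using is_graph unfolding graph_def by auto

lemma adj_irrefl: "\<not> E v v"
  using is_graph unfolding graph_def by auto

lemma induced_V: "induced V E = E"
  using adj_in_V unfolding induced_def by (auto intro!: ext)

lemma graph_induced: "S \<subseteq> V \<Longrightarrow> graph S (induced S E)"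
  using finite_V adj_sym adj_irrefl unfolding graph_def induced_def by (auto intro: finite_subset)

lemma independent_induced_iff:
  "S \<subseteq> V \<Longrightarrow> independent S (induced S E) M \<longleftrightarrow> M \<subseteq> S \<and> independent V E M"
  unfolding independent_def induced_def by blast

lemma independent_nonadj: "independent V E S \<Longrightarrow> a \<in> S \<Longrightarrow> b \<in> S \<Longrightarrow> \<not> E a b"
  unfolding independent_def by auto

lemma independent_subset: "independent V E S \<Longrightarrow> T \<subseteq> S \<Longrightarrow> independent V E T"
  unfolding independent_def by blast

lemma independent_insert:
  "independent V E S \<Longrightarrow> v \<in> V \<Longrightarrow> \<forall>t\<in>S. \<not> E v t \<Longrightarrow> independent V E (insert v S)"
  using adj_sym adj_irrefl unfolding independent_def by blast

lemma finite_independent: "independent V E S \<Longrightarrow> finite S"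
  using finite_V finite_subset unfolding independent_def by blast

lemma maximal_independentD: "maximal_independent V E S \<Longrightarrow> independent V E S"
  unfolding maximal_independent_def by auto

lemma maximal_independent_extends:
  assumes "independent V E D"
  obtains S where "maximal_independent V E S" "D \<subseteq> S"
proof -
  have bound: "card T < Suc (card V)" if "independent V E T" for T
    using that card_mono[OF finite_V] unfolding independent_def by (simp add: less_Suc_eq_le)
  have "\<exists>T. (independent V E T \<and> D \<subseteq> T) \<and>
      (\<forall>T'. independent V E T' \<and> D \<subseteq> T' \<longrightarrow> card T' \<le> card T)"
    by (rule ex_has_greatest_nat[where b = "Suc (card V)"]) (use assms bound in auto)
  then obtain T where T: "independent V E T" "D \<subseteq> T"
    and greatest: "\<And>T'. independent V E T' \<Longrightarrow> D \<subseteq> T' \<Longrightarrow> card T' \<le> card T"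
    by blast
  have "maximal_independent V E T"
    unfolding maximal_independent_def
  proof (intro conjI allI impI)
    show "independent V E T"
      using T by auto
    fix T' assume T': "independent V E T' \<and> T \<subseteq> T'"
    then have "card T' \<le> card T"
      using T greatest by blast
    with T' show "T' = T"
      using finite_independent card_seteq by blast
  qed
  with T that show ?thesis by auto
qed

lemma maximal_independent_dominates:
  assumes S: "maximal_independent V E S" and v: "v \<in> V" "v \<notin> S"
  obtains s where "s \<in> S" "E v s"
proof -
  have "\<not> independent V E (insert v S)"
    using S v unfolding maximal_independent_def by blast
  then show ?thesis
    using independent_insert[OF maximal_independentD[OF S] v(1)] that by blast
qed

lemma finite_independent_cards: "finite {card S | S. independent V E S}"
proof -
  have "{card S | S. independent V E S} \<subseteq> card ` Pow V"
    unfolding independent_def by auto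
  then show ?thesis
    using finite_V by (meson finite_Pow_iff finite_imageI finite_subset)
qed

lemma alpha_ge: "independent V E S \<Longrightarrow> card S \<le> alpha V E"
  unfolding alpha_def using finite_independent_cards by (intro Max_ge) auto

lemma alpha_attained:
  obtains S where "independent V E S" "card S = alpha V E"
proof -
  have "independent V E {}"
    unfolding independent_def by auto
  then have "alpha V E \<in> {card S | S. independent V E S}"
    unfolding alpha_def using finite_independent_cards by (intro Max_in) auto
  then show ?thesis
    using that by auto
qed

lemma finite_maximal_independent_cards: "finite {card S | S. maximal_independent V E S}"
  by (rule rev_finite_subset[OF finite_independent_cards]) (auto dest: maximal_independentD)

lemma indep_dom_le: "maximal_independent V E S \<Longrightarrow> indep_dom V E \<le> card S"
  unfolding indep_dom_def using finite_maximal_independent_cards by (intro Min_le) auto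

lemma indep_dom_attained:
  obtains S where "maximal_independent V E S" "card S = indep_dom V E"
proof -
  have "independent V E {}"
    unfolding independent_def by auto
  then obtain S0 where "maximal_independent V E S0"
    by (rule maximal_independent_extends)
  then have "indep_dom V E \<in> {card S | S. maximal_independent V E S}"
    unfolding indep_dom_def using finite_maximal_independent_cards by (intro Min_in) auto
  then show ?thesis
    using that by auto
qed

lemma almost_well_coveredI:
  assumes "\<And>S. maximal_independent V E S \<Longrightarrow> int (alpha V E) - 1 \<le> int (card S)"
    and "maximal_independent V E S0" "int (card S0) = int (alpha V E) - 1"
  shows "almost_well_covered V E"
proof -
  obtain S where "maximal_independent V E S" "card S = indep_dom V E"
    by (rule indep_dom_attained)
  with assms show ?thesis
    using indep_dom_le[OF assms(2)] unfolding almost_well_covered_def by force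
qed

lemma degree_2_neighbours:
  assumes "degree V E a = 2" "E a b" "E a c" "b \<noteq> c" "E a t"
  shows "t = b \<or> t = c"
proof (rule ccontr)
  assume "\<not> (t = b \<or> t = c)"
  with assms have "card {b, c, t} = 3" "{b, c, t} \<subseteq> {u \<in> V. E a u}"
    using adj_in_V by auto
  then show False
    using card_mono[of "{u \<in> V. E a u}" "{b, c, t}"] finite_V assms(1)
    unfolding degree_def by simp
qed

lemma cycle_other_neighbour:
  assumes c: "is_cycle V E cs" and v: "v \<in> set cs"
  obtains r where "r \<in> set cs" "E v r" "r \<noteq> b"
proof -
  define n where "n = length cs"
  have n3: "n \<ge> 3" and dist: "distinct cs" and step: "\<And>i. i < n \<Longrightarrow> E (cs ! i) (cs ! ((i + 1) mod n))"
    using c unfolding is_cycle_def n_def by auto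
  obtain i where i: "i < n" "cs ! i = v"
    using v unfolding n_def by (auto simp: in_set_conv_nth)
  define succ where "succ = (i + 1) mod n"
  define pred where "pred = (if i = 0 then n - 1 else i - 1)"
  have idx: "succ < n" "pred < n" "(pred + 1) mod n = i" "succ \<noteq> pred"
    using i n3 unfolding succ_def pred_def by (auto simp: mod_Suc)
  have "E v (cs ! succ)" "E v (cs ! pred)"
    using step[of i] step[of pred] i idx adj_sym unfolding succ_def by auto
  moreover have "cs ! succ \<noteq> cs ! pred"
    using nth_eq_iff_index_eq[OF dist] idx unfolding n_def by auto
  ultimately show ?thesis
    using that idx nth_mem unfolding n_def by metis
qed

lemma induced_6cycleI:
  assumes "E a b" "E b c" "E c d" "E d e" "E e f" "E f a"
    and "distinct [a, b, c, d, e, f]"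
    and "\<not> E a c" "\<not> E a d" "\<not> E a e" "\<not> E b d" "\<not> E b e" "\<not> E b f" "\<not> E c e" "\<not> E c f" "\<not> E d f"
  shows "is_induced_cycle V E [a, b, c, d, e, f]"
proof -
  have "\<not> E c a" "\<not> E d a" "\<not> E e a" "\<not> E d b" "\<not> E e b" "\<not> E f b" "\<not> E e c" "\<not> E f c" "\<not> E f d"
    using assms(8-16) adj_sym by blast+
  with assms adj_in_V adj_irrefl show ?thesis
    unfolding is_induced_cycle_def is_cycle_def by (simp add: All_less_Suc)
qed

lemma girth_le_cycle_length: "is_cycle V E cs \<Longrightarrow> girth V E \<le> enat (length cs)"
  unfolding girth_def by (rule Inf_lower) auto

end


section \<open>Graphs of girth at least 6\<close>

locale girth6_graph = fin_graph +
  assumes girth_ge_6: "6 \<le> girth V E"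
begin

lemma cycle_length_ge_6: "is_cycle V E cs \<Longrightarrow> 6 \<le> length cs"
  using order_trans[OF girth_ge_6 girth_le_cycle_length] by (simp add: numeral_eq_enat)

lemma no_triangle: "E a b \<Longrightarrow> E b c \<Longrightarrow> E c a \<Longrightarrow> False"
  using cycle_length_ge_6[of "[a, b, c]"] adj_in_V adj_irrefl
  unfolding is_cycle_def by (auto simp: All_less_Suc)

lemma no_4cycle: "E a b \<Longrightarrow> E b c \<Longrightarrow> E c d \<Longrightarrow> E d a \<Longrightarrow> a \<noteq> c \<Longrightarrow> b \<noteq> d \<Longrightarrow> False"
  using cycle_length_ge_6[of "[a, b, c, d]"] adj_in_V adj_irrefl
  unfolding is_cycle_def by (auto simp: All_less_Suc)

lemma no_5cycle:
  "E a b \<Longrightarrow> E b c \<Longrightarrow> E c d \<Longrightarrow> E d e \<Longrightarrow> E e a \<Longrightarrow>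
    a \<noteq> c \<Longrightarrow> a \<noteq> d \<Longrightarrow> b \<noteq> d \<Longrightarrow> b \<noteq> e \<Longrightarrow> c \<noteq> e \<Longrightarrow> False"
  using cycle_length_ge_6[of "[a, b, c, d, e]"] adj_in_V adj_irrefl
  unfolding is_cycle_def by (auto simp: All_less_Suc)

lemma edge_neighbours_independent:
  assumes "E c d" "D \<subseteq> {t. E t c \<or> E t d} - {c, d}"
  shows "independent V E D"
  unfolding independent_def
proof (intro conjI ballI)
  show "D \<subseteq> V"
    using assms(2) adj_in_V by blast
  fix a b assume "a \<in> D" "b \<in> D"
  with assms(2) have a: "a \<noteq> c" "a \<noteq> d" "E a c \<or> E a d" and b: "b \<noteq> c" "b \<noteq> d" "E b c \<or> E b d"
    by auto
  show "\<not> E a b"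
  proof
    assume "E a b"
    with a b assms(1) show False
      using no_triangle[of a b c] no_triangle[of a b d] no_4cycle[of a b d c] no_4cycle[of a b c d] adj_sym
      by metis
  qed
qed

lemma six_cycle_through_edge:
  assumes ab: "E a b" and deg: "degree V E a = 2" "degree V E b = 2"
    and nonadj: "\<not> E c a" "\<not> E c b" "\<not> E d a" "\<not> E d b" and dist: "distinct [a, b, c, d]"
    and cyc: "is_cycle V E cs" "length cs = 6" "{a, b, c, d} \<subseteq> set cs"
  obtains ta tb where "\<forall>t. E a t \<longrightarrow> t = b \<or> t = ta" "\<forall>t. E b t \<longrightarrow> t = a \<or> t = tb"
    "E c ta \<or> E c tb" "E d ta \<or> E d tb"
proof -
  obtain ta where ta: "ta \<in> set cs" "E a ta" "ta \<noteq> b"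
    using cycle_other_neighbour[OF cyc(1)] cyc(3) by blast
  obtain tb where tb: "tb \<in> set cs" "E b tb" "tb \<noteq> a"
    using cycle_other_neighbour[OF cyc(1)] cyc(3) by blast
  have Na: "\<forall>t. E a t \<longrightarrow> t = b \<or> t = ta"
    using degree_2_neighbours[OF deg(1) ab ta(2)] ta(3) by auto
  have Nb: "\<forall>t. E b t \<longrightarrow> t = a \<or> t = tb"
    using degree_2_neighbours[OF deg(2) adj_sym[OF ab] tb(2)] tb(3) by auto
  have "ta \<noteq> tb"
    using no_triangle[of a b ta] ab tb(2) adj_sym[OF ta(2)] by auto
  moreover have "ta \<notin> {a, c, d}" "tb \<notin> {b, c, d}"
    using nonadj ta(2) tb(2) adj_sym adj_irrefl by blast+
  ultimately have "card {a, b, c, d, ta, tb} = 6"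
    using dist ta(3) tb(3) by auto
  moreover have "card (set cs) = 6"
    using cyc(1,2) distinct_card unfolding is_cycle_def by metis
  ultimately have cs: "set cs = {a, b, c, d, ta, tb}"
    using cyc(3) ta(1) tb(1) by (intro card_seteq[symmetric]) auto
  have "E c ta \<or> E c tb"
  proof -
    obtain r where "r \<in> set cs" "E c r" "r \<noteq> d"
      using cycle_other_neighbour[OF cyc(1)] cyc(3) by blast
    then show ?thesis
      using cs nonadj adj_irrefl adj_sym by auto
  qed
  moreover have "E d ta \<or> E d tb"
  proof -
    obtain r where "r \<in> set cs" "E d r" "r \<noteq> c"
      using cycle_other_neighbour[OF cyc(1)] cyc(3) by blast
    then show ?thesis
      using cs nonadj adj_irrefl adj_sym by auto
  qed
  ultimately show ?thesis
    using that Na Nb by blast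
qed

end


section \<open>Leaves, support vertices and G_0\<close>

locale girth6_type2_pair = girth6_graph +
  fixes x y :: 'a
  assumes connected: "connected_graph V E"
    and type2_distinct: "x \<noteq> y"
    and type2_vertices: "type_vertices V E 2 = {x, y}"
    and types_le_2: "\<forall>v k. has_type V E v k \<longrightarrow> k \<le> 2"
begin

text \<open>The set U of the paper is empty here (no_complete_components), so Leaves are its leaves
  and supports its internal vertices of nonzero type.\<close>

definition Leaves :: "'a set" where
  "Leaves = {v \<in> V. degree V E v = 1}"

definition leaves_at :: "'a \<Rightarrow> 'a set" where
  "leaves_at w = {l \<in> Leaves. E w l}"

definition V0 :: "'a set" where
  "V0 = type_vertices V E 0"

definition supports :: "'a set" where
  "supports = V - Leaves - V0"

lemma reachable: "u \<in> V \<Longrightarrow> v \<in> V \<Longrightarrow> E\<^sup>*\<^sup>* u v"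
  using connected unfolding connected_graph_def by auto

lemma no_complete_components: "complete_comp_vertices V E = {}"
proof -
  have "has_type V E x 2"
    using type2_vertices unfolding type_vertices_def by auto
  then have "x \<notin> complete_comp_vertices V E" "x \<in> V"
    unfolding has_type_def internal_vertices_def by auto
  then obtain a b where ab: "E\<^sup>*\<^sup>* x a" "E\<^sup>*\<^sup>* x b" "a \<noteq> b" "\<not> E a b"
    unfolding complete_comp_vertices_def by auto
  have "v \<notin> complete_comp_vertices V E" for v
  proof
    assume v: "v \<in> complete_comp_vertices V E"
    with \<open>x \<in> V\<close> have "E\<^sup>*\<^sup>* v x"
      using reachable unfolding complete_comp_vertices_def by auto
    with ab have "E\<^sup>*\<^sup>* v a" "E\<^sup>*\<^sup>* v b"
      by (meson rtranclp_trans)+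
    with ab v show False
      unfolding complete_comp_vertices_def by blast
  qed
  then show ?thesis
    by blast
qed

lemma has_type_iff: "has_type V E v k \<longleftrightarrow> v \<in> V - Leaves \<and> card (leaves_at v) = k"
  unfolding has_type_def internal_vertices_def leaves_def leaves_at_def Leaves_def
  using no_complete_components induced_V by simp

lemma Leaves_subset: "Leaves \<subseteq> V"
  unfolding Leaves_def by auto

lemma finite_Leaves: "finite Leaves"
  using Leaves_subset finite_V finite_subset by blast

lemma finite_leaves_at: "finite (leaves_at w)"
  unfolding leaves_at_def using finite_Leaves by auto

lemma V0_eq: "V0 = {v \<in> V - Leaves. leaves_at v = {}}"
  unfolding V0_def type_vertices_def using has_type_iff finite_leaves_at by auto

lemma V0_subset: "V0 \<subseteq> V - Leaves"
  using V0_eq by auto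

lemma finite_V0: "finite V0"
  using V0_subset finite_V finite_subset by blast

lemma type2_internal: "x \<in> V - Leaves" "y \<in> V - Leaves"
  and card_leaves_at_type2: "card (leaves_at x) = 2" "card (leaves_at y) = 2"
  using type2_vertices has_type_iff unfolding type_vertices_def by blast+

lemma type2_not_V0: "x \<notin> V0" "y \<notin> V0"
  using type2_internal card_leaves_at_type2 V0_eq by auto

lemma type2_supports: "x \<in> supports" "y \<in> supports"
  unfolding supports_def using type2_internal type2_not_V0 by auto

lemma card_leaves_at_supports:
  assumes "w \<in> supports"
  shows "card (leaves_at w) = 1 + (if w = x then 1 else 0) + (if w = y then 1 else 0)"
proof (cases "w = x \<or> w = y")
  case True
  then show ?thesis
    using card_leaves_at_type2 type2_distinct by auto
next
  case False
  with assms have "w \<in> V" "has_type V E w (card (leaves_at w))" "w \<notin> type_vertices V E 2"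
    using has_type_iff type2_vertices unfolding supports_def by auto
  then have "card (leaves_at w) \<noteq> 2" "card (leaves_at w) \<le> 2"
    using types_le_2 unfolding type_vertices_def by auto
  moreover have "card (leaves_at w) \<noteq> 0"
    using assms V0_eq finite_leaves_at unfolding supports_def by auto
  ultimately show ?thesis
    using False by auto
qed

lemma leaf_neighbour_unique:
  assumes "l \<in> Leaves" "E l p" "E l q"
  shows "p = q"
proof -
  have "card {u \<in> V. E l u} = 1"
    using assms(1) unfolding Leaves_def degree_def by simp
  moreover have "p \<in> {u \<in> V. E l u}" "q \<in> {u \<in> V. E l u}"
    using assms adj_in_V by auto
  ultimately show ?thesis
    by (metis card_1_singletonE singletonD)
qed

lemma leaves_at_disjoint: "w \<noteq> w' \<Longrightarrow> leaves_at w \<inter> leaves_at w' = {}"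
  unfolding leaves_at_def using leaf_neighbour_unique adj_sym by blast

lemma leaf_neighbour_supports:
  assumes l: "l \<in> Leaves" and p: "E l p"
  shows "p \<in> supports" "l \<in> leaves_at p"
proof -
  show lp: "l \<in> leaves_at p"
    unfolding leaves_at_def using l p adj_sym by auto
  have "p \<notin> Leaves"
  proof
    assume "p \<in> Leaves"
    have "t \<in> {l, p}" if "E\<^sup>*\<^sup>* l t" for t
      using that
    proof (induction rule: rtranclp_induct)
      case (step t u)
      then show ?case
        using l p \<open>p \<in> Leaves\<close> leaf_neighbour_unique[of l p u] leaf_neighbour_unique[of p l u]
          adj_sym[OF p] by auto
    qed simp
    moreover have "E\<^sup>*\<^sup>* l x"
      using reachable l Leaves_subset type2_internal by auto
    ultimately show False
      using l \<open>p \<in> Leaves\<close> type2_internal by auto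
  qed
  then show "p \<in> supports"
    using lp p adj_in_V V0_eq unfolding supports_def by auto
qed

lemma V0_no_leaf_neighbour: "v \<in> V0 \<Longrightarrow> E v t \<Longrightarrow> t \<notin> Leaves"
  using V0_eq unfolding leaves_at_def by auto

lemma internal_other_neighbour:
  assumes "v \<in> V - Leaves"
  obtains z where "E v z" "z \<noteq> t"
proof -
  let ?N = "{u \<in> V. E v u}"
  have "?N \<noteq> {t}"
    using assms unfolding Leaves_def degree_def by auto
  moreover have "?N \<noteq> {}"
  proof
    assume "?N = {}"
    have isolated: "u = v" if "E\<^sup>*\<^sup>* v u" for u
      using that by (induction rule: rtranclp_induct) (use \<open>?N = {}\<close> adj_in_V in auto)
    have "E\<^sup>*\<^sup>* v x" "E\<^sup>*\<^sup>* v y"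
      using reachable assms type2_internal by auto
    then show False
      using isolated type2_distinct by metis
  qed
  ultimately have "\<exists>z. E v z \<and> z \<noteq> t"
    by blast
  then show ?thesis
    using that by blast
qed

lemma leaves_at_outside_independent:
  "independent V E S \<Longrightarrow> w \<in> S \<Longrightarrow> leaves_at w \<subseteq> Leaves - S"
  unfolding leaves_at_def using independent_nonadj by blast

lemma card_UN_leaves_at:
  assumes "T \<subseteq> supports" "finite T"
  shows "card (\<Union>w\<in>T. leaves_at w) = card T + (if x \<in> T then 1 else 0) + (if y \<in> T then 1 else 0)"
proof -
  have "card (\<Union>w\<in>T. leaves_at w) = (\<Sum>w\<in>T. card (leaves_at w))"
    using assms(2) by (rule card_UN_disjoint) (auto simp: finite_leaves_at leaves_at_disjoint)
  also have "\<dots> = (\<Sum>w\<in>T. 1 + (if w = x then 1 else 0) + (if w = y then 1 else 0))"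
    using assms(1) by (intro sum.cong) (auto simp: card_leaves_at_supports)
  also have "\<dots> = card T + (if x \<in> T then 1 else 0) + (if y \<in> T then 1 else 0)"
    using assms(2) by (simp only: sum.distrib) (simp add: sum.delta')
  finally show ?thesis .
qed

lemma card_split_Leaves_supports_V0:
  assumes "S \<subseteq> V"
  shows "card S = card (S \<inter> Leaves) + card (S \<inter> supports) + card (S \<inter> V0)"
proof -
  have fin: "finite S"
    using assms finite_V finite_subset by blast
  have "S = (S \<inter> Leaves) \<union> (S \<inter> supports) \<union> (S \<inter> V0)"
    using assms unfolding supports_def by auto
  also have "card \<dots> = card ((S \<inter> Leaves) \<union> (S \<inter> supports)) + card (S \<inter> V0)"
    using fin V0_subset unfolding supports_def by (intro card_Un_disjoint) auto
  also have "card ((S \<inter> Leaves) \<union> (S \<inter> supports)) = card (S \<inter> Leaves) + card (S \<inter> supports)"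
    using fin unfolding supports_def by (intro card_Un_disjoint) auto
  finally show ?thesis .
qed

lemma card_Leaves_split: "card Leaves = card (S \<inter> Leaves) + card (Leaves - S)"
  using card_Int_Diff[OF finite_Leaves, of S] by (simp add: Int_commute)

lemma card_independent_le:
  assumes S: "independent V E S"
  shows "card S \<le> card Leaves + card (S \<inter> V0)"
proof -
  have fin: "finite (S \<inter> supports)"
    using finite_independent[OF S] by auto
  have "card (S \<inter> supports) \<le> card (\<Union>w\<in>S \<inter> supports. leaves_at w)"
    using card_UN_leaves_at[OF _ fin] by simp
  also have "\<dots> \<le> card (Leaves - S)"
    using leaves_at_outside_independent[OF S] finite_Leaves by (intro card_mono) auto
  finally show ?thesis
    using card_split_Leaves_supports_V0[of S] card_Leaves_split[of S] S
    unfolding independent_def by linarith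
qed

lemma independent_Leaves_Un:
  assumes M: "M \<subseteq> V0" "independent V E M"
  shows "independent V E (Leaves \<union> M)"
  unfolding independent_def
proof (intro conjI ballI)
  show "Leaves \<union> M \<subseteq> V"
    using Leaves_subset M V0_subset by auto
  fix a b assume a: "a \<in> Leaves \<union> M" and b: "b \<in> Leaves \<union> M"
  show "\<not> E a b"
  proof
    assume ab: "E a b"
    show False
    proof (cases "a \<in> Leaves")
      case True
      then have "b \<in> supports"
        using leaf_neighbour_supports ab by blast
      with b M show False
        unfolding supports_def by auto
    next
      case False
      with a M ab have "a \<in> M" "b \<in> M"
        using V0_no_leaf_neighbour b by auto
      with M(2) ab show False
        using independent_nonadj by blast
    qed
  qed
qed

lemma fin_graph_V0: "fin_graph V0 (induced V0 E)"
  using graph_induced V0_subset by (intro fin_graph.intro) auto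

lemma independent_induced_V0_iff: "independent V0 (induced V0 E) M \<longleftrightarrow> M \<subseteq> V0 \<and> independent V E M"
  using independent_induced_iff V0_subset by blast

lemma alpha_V0_ge: "M \<subseteq> V0 \<Longrightarrow> independent V E M \<Longrightarrow> card M \<le> alpha V0 (induced V0 E)"
  by (rule fin_graph.alpha_ge[OF fin_graph_V0]) (simp add: independent_induced_V0_iff)

lemma alpha_V0_attained:
  obtains M where "M \<subseteq> V0" "independent V E M" "card M = alpha V0 (induced V0 E)"
  using fin_graph.alpha_attained[OF fin_graph_V0] that by (auto simp: independent_induced_V0_iff)

lemma alpha_eq: "alpha V E = card Leaves + alpha V0 (induced V0 E)"
proof (rule antisym)
  obtain S where S: "independent V E S" "card S = alpha V E"
    by (rule alpha_attained)
  then have "card (S \<inter> V0) \<le> alpha V0 (induced V0 E)"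
    using independent_subset by (intro alpha_V0_ge) auto
  with S show "alpha V E \<le> card Leaves + alpha V0 (induced V0 E)"
    using card_independent_le by fastforce
next
  obtain M where M: "M \<subseteq> V0" "independent V E M" "card M = alpha V0 (induced V0 E)"
    by (rule alpha_V0_attained)
  have "card (Leaves \<union> M) = card Leaves + card M"
    using M finite_V0 finite_Leaves V0_subset by (intro card_Un_disjoint) (auto intro: finite_subset)
  with M show "card Leaves + alpha V0 (induced V0 E) \<le> alpha V E"
    using alpha_ge[OF independent_Leaves_Un] by metis
qed

text \<open>Each leaf outside S is dominated by its unique neighbour, a support vertex in S.\<close>

lemma card_maximal_independent:
  assumes S: "maximal_independent V E S"
  shows "int (card S) = int (card Leaves) + int (card (S \<inter> V0))
    - (if x \<in> S then 1 else 0) - (if y \<in> S then 1 else 0)"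
proof -
  have Si: "independent V E S"
    using maximal_independentD[OF S] .
  have "Leaves - S = (\<Union>w\<in>S \<inter> supports. leaves_at w)"
  proof
    show "Leaves - S \<subseteq> (\<Union>w\<in>S \<inter> supports. leaves_at w)"
    proof
      fix l assume l: "l \<in> Leaves - S"
      then obtain s where "s \<in> S" "E l s"
        using maximal_independent_dominates[OF S] Leaves_subset by blast
      with l show "l \<in> (\<Union>w\<in>S \<inter> supports. leaves_at w)"
        using leaf_neighbour_supports by blast
    qed
  qed (use leaves_at_outside_independent[OF Si] in auto)
  then have "card (Leaves - S) = card (S \<inter> supports) + (if x \<in> S then 1 else 0) + (if y \<in> S then 1 else 0)"
    using card_UN_leaves_at[of "S \<inter> supports"] finite_independent[OF Si] type2_supports by simp
  moreover have "S \<subseteq> V"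
    using Si unfolding independent_def by blast
  ultimately have "card S + (if x \<in> S then 1 else 0) + (if y \<in> S then 1 else 0) = card Leaves + card (S \<inter> V0)"
    using card_split_Leaves_supports_V0[of S] card_Leaves_split[of S] by linarith
  then show ?thesis
    by (cases "x \<in> S"; cases "y \<in> S") simp_all
qed

subsection \<open>Necessity\<close>

lemma awc_extension_bound:
  assumes awc: "almost_well_covered V E" and S: "maximal_independent V E S"
    and M: "M \<subseteq> V0 - S" "independent V E M" "\<forall>m\<in>M. \<forall>t\<in>S \<inter> V0. \<not> E m t"
  shows "int (card M) \<le> 1 - (if x \<in> S then 1 else 0) - (if y \<in> S then 1 else 0)"
proof -
  have "independent V E (M \<union> (S \<inter> V0))"
    using M maximal_independentD[OF S] adj_sym unfolding independent_def by blast
  then have "card (M \<union> (S \<inter> V0)) \<le> alpha V0 (induced V0 E)"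
    using M(1) by (intro alpha_V0_ge) auto
  moreover have "card (M \<union> (S \<inter> V0)) = card M + card (S \<inter> V0)"
    using M(1) finite_V0 by (intro card_Un_disjoint) (auto intro: finite_subset)
  ultimately show ?thesis
    using awc alpha_eq indep_dom_le[OF S] card_maximal_independent[OF S]
    unfolding almost_well_covered_def by linarith
qed

lemma awc_type2_adjacent:
  assumes awc: "almost_well_covered V E"
  shows "E x y"
proof (rule ccontr)
  assume "\<not> E x y"
  then have "independent V E {x, y}"
    using adj_sym adj_irrefl type2_internal unfolding independent_def by auto
  then obtain S where "maximal_independent V E S" "{x, y} \<subseteq> S"
    by (rule maximal_independent_extends)
  with awc_extension_bound[OF awc, of S "{}"] show False
    unfolding independent_def by auto
qed

text \<open>Otherwise pick, for every V0-neighbour u of v, a neighbour of u outside the closed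
  neighbourhood of s. Girth at least 6 makes these together with s and w independent, and a
  maximal extension of this set contains a type-2 vertex but leaves v undominated within V0.\<close>

lemma awc_V0_neighbour_near_type2:
  assumes awc: "almost_well_covered V E" and v: "v \<in> V0" "E v w" "w \<notin> V0"
    and s: "s \<in> {x, y}" "s = w \<or> \<not> E s w"
  obtains u where "u \<in> V0" "E v u" "\<forall>z. E u z \<and> z \<noteq> v \<longrightarrow> z = s \<or> E z s"
proof -
  define N where "N = {u \<in> V0. E v u}"
  have "\<exists>u\<in>N. \<forall>z. E u z \<and> z \<noteq> v \<longrightarrow> z = s \<or> E z s"
  proof (rule ccontr)
    assume "\<not> ?thesis"
    then obtain far where far: "\<And>u. u \<in> N \<Longrightarrow> E u (far u) \<and> far u \<noteq> v \<and> far u \<noteq> s \<and> \<not> E (far u) s"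
      by metis
    have N: "E v u" "u \<noteq> w" if "u \<in> N" for u
      using that v(3) unfolding N_def by auto
    have far_w: "\<not> E (far u) w" if "u \<in> N" for u
      using no_4cycle[of v u "far u" w] N[OF that] far[OF that] v(2) adj_sym by blast
    have far_far: "\<not> E (far u) (far u')" if "u \<in> N" "u' \<in> N" for u u'
    proof
      assume "E (far u) (far u')"
      moreover have "\<not> E u u'"
        using no_triangle[of v u u'] N that adj_sym by blast
      ultimately show False
        using no_5cycle[of v u "far u" "far u'" u'] N that far adj_sym adj_irrefl by metis
    qed
    define D where "D = insert s (insert w (far ` N))"
    have "independent V E D"
      unfolding independent_def
    proof (intro conjI ballI)
      show "D \<subseteq> V"
        unfolding D_def using s type2_internal v adj_in_V far by blast
      fix a b assume "a \<in> D" "b \<in> D"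
      then show "\<not> E a b"
        unfolding D_def using s(2) far far_w far_far adj_sym adj_irrefl by blast
    qed
    then obtain S where S: "maximal_independent V E S" "D \<subseteq> S"
      by (rule maximal_independent_extends)
    have "v \<notin> S"
      using S independent_nonadj[OF maximal_independentD[OF S(1)]] v(2) unfolding D_def by blast
    moreover have "\<forall>t\<in>S \<inter> V0. \<not> E v t"
      using S independent_nonadj[OF maximal_independentD[OF S(1)]] far unfolding D_def N_def by blast
    moreover have "x \<in> S \<or> y \<in> S"
      using S s unfolding D_def by blast
    ultimately show False
      using awc_extension_bound[OF awc S(1), of "{v}"] v(1) adj_in_V[OF v(2)] adj_irrefl
      unfolding independent_def by (auto split: if_splits)
  qed
  with that show ?thesis
    unfolding N_def by blast
qed

lemma awc_V0_not_adjacent_type2: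
  assumes awc: "almost_well_covered V E" and v: "v \<in> V0" and s: "s \<in> {x, y}"
  shows "\<not> E v s"
proof
  assume vs: "E v s"
  have "s \<notin> V0"
    using s type2_not_V0 by auto
  then obtain u where u: "u \<in> V0" "E v u" and near: "\<forall>z. E u z \<and> z \<noteq> v \<longrightarrow> z = s \<or> E z s"
    using awc_V0_neighbour_near_type2[OF awc v vs _ s] by blast
  obtain z where z: "E u z" "z \<noteq> v"
    using internal_other_neighbour u(1) V0_subset by blast
  have "s \<noteq> u"
    using u(1) \<open>s \<notin> V0\<close> by auto
  then show False
    using near z no_triangle[of v u s] no_4cycle[of s v u z] vs u(2) adj_sym by metis
qed

lemma awc_V0_neighbours_pinned:
  assumes awc: "almost_well_covered V E" and u: "u \<in> V0" "E u v" "E u z" "z \<noteq> v"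
    and s: "s \<in> {x, y}" "E z s" and near: "\<forall>t. E u t \<and> t \<noteq> v \<longrightarrow> t = s \<or> E t s"
  shows "\<forall>t. E u t \<longleftrightarrow> t = v \<or> t = z"
proof (intro allI iffI)
  fix t assume ut: "E u t"
  show "t = v \<or> t = z"
  proof (rule ccontr)
    assume "\<not> (t = v \<or> t = z)"
    moreover have "E t s"
      using near ut calculation awc_V0_not_adjacent_type2[OF awc u(1) s(1)] by blast
    moreover have "u \<noteq> s"
      using u(1) s(1) type2_not_V0 by auto
    ultimately show False
      using no_4cycle[of u z s t] u(3) s(2) ut adj_sym by blast
  qed
qed (use u(2,3) in auto)

lemma awc_V0_attachment:
  assumes awc: "almost_well_covered V E" and xy: "E x y" and v: "v \<in> V0" "E v w" "w \<notin> V0"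
  obtains u z s s' where "(s = x \<and> s' = y) \<or> (s = y \<and> s' = x)" "u \<in> V0" "z \<notin> V0"
    "\<forall>t. E v t \<longleftrightarrow> t = u \<or> t = w" "\<forall>t. E u t \<longleftrightarrow> t = v \<or> t = z" "E w s'" "E z s"
proof -
  have w_type2: "w \<noteq> x" "w \<noteq> y"
    using awc_V0_not_adjacent_type2[OF awc v(1)] v(2) by auto
  obtain s s' where ss: "(s = x \<and> s' = y) \<or> (s = y \<and> s' = x)" and "\<not> E s w"
    using no_triangle[of x y w] xy adj_sym by blast
  then have s: "s \<in> {x, y}" "s' \<in> {x, y}" "E s s'"
    using xy adj_sym by auto
  obtain u where u: "u \<in> V0" "E v u" and near_u: "\<forall>t. E u t \<and> t \<noteq> v \<longrightarrow> t = s \<or> E t s"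
    using awc_V0_neighbour_near_type2[OF awc v] s(1) \<open>\<not> E s w\<close> by blast
  obtain z where z: "E u z" "z \<noteq> v"
    using internal_other_neighbour u(1) V0_subset by blast
  have zs: "E z s"
    using near_u z awc_V0_not_adjacent_type2[OF awc u(1) s(1)] by blast
  have Nu: "\<forall>t. E u t \<longleftrightarrow> t = v \<or> t = z"
    using awc_V0_neighbours_pinned[OF awc u(1) _ z s(1) zs near_u] u(2) adj_sym by blast
  have "z \<notin> V0"
    using awc_V0_not_adjacent_type2[OF awc _ s(1)] zs by blast
  moreover have "\<not> E s' z"
    using no_triangle[of s s' z] s(3) zs adj_sym by blast
  ultimately obtain u' where u': "u' \<in> V0" "E u u'" and near_u': "\<forall>t. E u' t \<and> t \<noteq> u \<longrightarrow> t = s' \<or> E t s'"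
    using awc_V0_neighbour_near_type2[OF awc u(1) z(1)] s(2) by blast
  have near_v: "\<forall>t. E v t \<and> t \<noteq> u \<longrightarrow> t = s' \<or> E t s'"
    using u' near_u' Nu \<open>z \<notin> V0\<close> by metis
  have ws': "E w s'"
    using near_v v(2,3) u(1) w_type2 s(2) by auto
  have Nv: "\<forall>t. E v t \<longleftrightarrow> t = u \<or> t = w"
    using awc_V0_neighbours_pinned[OF awc v(1) u(2) v(2) _ s(2) ws' near_v] v(3) u(1) by blast
  show ?thesis
    using that ss u(1) \<open>z \<notin> V0\<close> Nv Nu ws' zs by blast
qed

text \<open>A second boundary vertex q2 of V0 would carry its own attachment; the outer ends of
  both attachments form an independent set whose maximal extension leaves the nonadjacent pair
  q, q2 undominated within V0.\<close>

lemma awc_V0_single_edge: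
  assumes awc: "almost_well_covered V E" and xy: "E x y"
    and V0: "q \<in> V0" "u \<in> V0" "p \<notin> V0" "z \<notin> V0"
    and Nq: "\<forall>t. E q t \<longleftrightarrow> t = u \<or> t = p" and Nu: "\<forall>t. E u t \<longleftrightarrow> t = q \<or> t = z"
    and type2_adj: "E p x \<or> E p y" "E z x \<or> E z y"
  shows "V0 = {q, u}"
proof (rule ccontr)
  assume "V0 \<noteq> {q, u}"
  then obtain h where h: "h \<in> V0 - {q, u}"
    using V0 by blast
  have closed: "\<forall>a\<in>{q, u}. \<forall>b\<in>V0. E b a \<longrightarrow> b \<in> {q, u}"
    using Nq Nu V0(3,4) adj_sym by blast
  have "E\<^sup>*\<^sup>* h x"
    using reachable h V0_subset type2_internal by blast
  from rtranclp_exit_avoiding[OF this h _ closed] type2_not_V0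
  obtain q2 p2 where q2: "q2 \<in> V0" "q2 \<notin> {q, u}" "E q2 p2" "p2 \<notin> V0"
    by blast
  obtain u2 z2 t t' where tt: "(t = x \<and> t' = y) \<or> (t = y \<and> t' = x)" and "u2 \<in> V0" "z2 \<notin> V0"
    and Nq2: "\<forall>r. E q2 r \<longleftrightarrow> r = u2 \<or> r = p2" and Nu2: "\<forall>r. E u2 r \<longleftrightarrow> r = q2 \<or> r = z2"
    and "E p2 t'" "E z2 t"
    by (rule awc_V0_attachment[OF awc xy q2(1,3,4)])
  have "E q p" "E u z" "E u2 z2"
    using Nq Nu Nu2 by auto
  have not_type2: "r \<notin> {x, y}" if "E v r" "v \<in> V0" for v r
    using that awc_V0_not_adjacent_type2[OF awc \<open>v \<in> V0\<close>] by blast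
  have "{p, z, p2, z2} \<subseteq> {t. E t x \<or> E t y} - {x, y}"
    using type2_adj tt \<open>E p2 t'\<close> \<open>E z2 t\<close> not_type2[OF \<open>E q p\<close> V0(1)] not_type2[OF \<open>E u z\<close> V0(2)]
      not_type2[OF q2(3,1)] not_type2[OF \<open>E u2 z2\<close> \<open>u2 \<in> V0\<close>] by auto
  then have "independent V E {p, z, p2, z2}"
    by (rule edge_neighbours_independent[OF xy])
  then obtain S where S: "maximal_independent V E S" "{p, z, p2, z2} \<subseteq> S"
    by (rule maximal_independent_extends)
  have "q \<notin> S" "u \<notin> S" "q2 \<notin> S" "u2 \<notin> S"
    using S independent_nonadj[OF maximal_independentD[OF S(1)]] \<open>E q p\<close> \<open>E u z\<close> q2(3) \<open>E u2 z2\<close>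
    by blast+
  then have "int (card {q, q2}) \<le> 1 - (if x \<in> S then 1 else 0) - (if y \<in> S then 1 else 0)"
    using V0(1,3) q2 \<open>p2 \<notin> V0\<close> Nq Nq2 adj_sym adj_irrefl V0_subset
    by (intro awc_extension_bound[OF awc S(1)]) (auto simp: independent_def)
  with q2(2) show False
    by (auto split: if_splits)
qed

lemma awc_V0_six_cycle:
  assumes awc: "almost_well_covered V E" and xy: "E x y"
    and V0: "q \<in> V0" "u \<in> V0" "p \<notin> V0" "z \<notin> V0"
    and Nq: "\<forall>t. E q t \<longleftrightarrow> t = u \<or> t = p" and Nu: "\<forall>t. E u t \<longleftrightarrow> t = q \<or> t = z"
    and ss: "(s = x \<and> s' = y) \<or> (s = y \<and> s' = x)" "E p s'" "E z s"
  shows "is_induced_cycle V E [q, u, z, s, s', p]"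
proof (rule induced_6cycleI)
  have s: "s \<in> {x, y}" "s' \<in> {x, y}" "E s s'" "s \<noteq> s'"
    using ss(1) xy adj_sym type2_distinct by auto
  show "E q u" "E u z" "E z s" "E s s'" "E s' p" "E p q"
    using Nq Nu ss(2,3) s(3) adj_sym by auto
  show V0_type2: "\<not> E q s" "\<not> E q s'" "\<not> E u s" "\<not> E u s'"
    using awc_V0_not_adjacent_type2[OF awc] V0 s by blast+
  show zs': "\<not> E z s'" and "\<not> E s p"
    using no_triangle[of z s s'] no_triangle[of s s' p] ss s(3) adj_sym by blast+
  with V0_type2 show "distinct [q, u, z, s, s', p]"
    using V0 s ss adj_irrefl type2_not_V0 Nq Nu by auto
  show "\<not> E q z" "\<not> E u p"
    using Nq Nu V0 zs' ss(2) by auto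
  show "\<not> E z p"
    using no_4cycle[of q u z p] Nq Nu V0 adj_sym by blast
qed

lemma awc_V0_nonempty:
  assumes awc: "almost_well_covered V E" and "V0 \<noteq> {}"
  shows "\<exists>a b. a \<noteq> b \<and> V0 = {a, b} \<and> E a b \<and> (\<forall>v \<in> V0. \<not> E x v \<and> \<not> E y v) \<and>
    degree V E a = 2 \<and> degree V E b = 2 \<and>
    (\<exists>cs. is_induced_cycle V E cs \<and> length cs = 6 \<and> {a, b, x, y} \<subseteq> set cs)"
proof -
  have xy: "E x y"
    using awc_type2_adjacent[OF awc] .
  obtain h where h: "h \<in> V0"
    using assms(2) by blast
  have "E\<^sup>*\<^sup>* h x"
    using reachable h V0_subset type2_internal by blast
  from rtranclp_exit_avoiding[OF this, of V0 "{}"] h type2_not_V0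
  obtain q p where q: "q \<in> V0" "E q p" "p \<notin> V0"
    by blast
  obtain u z s s' where ss: "(s = x \<and> s' = y) \<or> (s = y \<and> s' = x)" and V0: "u \<in> V0" "z \<notin> V0"
    and Nq: "\<forall>t. E q t \<longleftrightarrow> t = u \<or> t = p" and Nu: "\<forall>t. E u t \<longleftrightarrow> t = q \<or> t = z"
    and "E p s'" "E z s"
    by (rule awc_V0_attachment[OF awc xy q])
  have "E p x \<or> E p y" "E z x \<or> E z y"
    using ss \<open>E p s'\<close> \<open>E z s\<close> by auto
  then have V0_eq: "V0 = {q, u}"
    using awc_V0_single_edge[OF awc xy q(1) V0(1) q(3) V0(2) Nq Nu] by blast
  have cycle: "is_induced_cycle V E [q, u, z, s, s', p]"
    using awc_V0_six_cycle[OF awc xy q(1) V0(1) q(3) V0(2) Nq Nu ss \<open>E p s'\<close> \<open>E z s\<close>] .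
  have "E q u" "E q p" "E u z"
    using Nq Nu by auto
  have "{t \<in> V. E q t} = {u, p}"
    using Nq adj_in_V[OF \<open>E q u\<close>] adj_in_V[OF \<open>E q p\<close>] by auto
  moreover have "{t \<in> V. E u t} = {q, z}"
    using Nu adj_in_V[OF \<open>E q u\<close>] adj_in_V[OF \<open>E u z\<close>] by auto
  moreover have "u \<noteq> p" "q \<noteq> z"
    using q V0 by auto
  ultimately have "degree V E q = 2" "degree V E u = 2"
    unfolding degree_def by auto
  moreover have "q \<noteq> u"
    using \<open>E q u\<close> adj_irrefl by auto
  moreover have "\<forall>v \<in> V0. \<not> E x v \<and> \<not> E y v"
    using awc_V0_not_adjacent_type2[OF awc] adj_sym by blast
  moreover have "{q, u, x, y} \<subseteq> set [q, u, z, s, s', p]"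
    using ss by auto
  ultimately show ?thesis
    using V0_eq cycle \<open>E q u\<close>
    by (intro exI[of _ q] exI[of _ u] conjI exI[of _ "[q, u, z, s, s', p]"]) simp_all
qed

subsection \<open>Sufficiency\<close>

lemma card_maximal_independent_ge:
  assumes xy: "E x y" and S: "maximal_independent V E S"
  shows "int (card Leaves) + int (card (S \<inter> V0)) - 1 \<le> int (card S)"
proof -
  have "\<not> (x \<in> S \<and> y \<in> S)"
    using independent_nonadj[OF maximal_independentD[OF S]] xy by blast
  then show ?thesis
    using card_maximal_independent[OF S] by (auto split: if_splits)
qed

lemma awc_if_V0_empty:
  assumes xy: "E x y" and V0: "V0 = {}"
  shows "almost_well_covered V E"
proof -
  obtain M where "M \<subseteq> V0" "card M = alpha V0 (induced V0 E)"
    by (rule alpha_V0_attained)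
  with V0 have alpha: "alpha V E = card Leaves"
    using alpha_eq by auto
  have "independent V E {x}"
    using type2_internal adj_irrefl unfolding independent_def by auto
  then obtain S0 where S0: "maximal_independent V E S0" "{x} \<subseteq> S0"
    by (rule maximal_independent_extends)
  then have "y \<notin> S0"
    using independent_nonadj[OF maximal_independentD[OF S0(1)]] xy by blast
  with S0 have "int (card S0) = int (alpha V E) - 1"
    using card_maximal_independent[OF S0(1)] alpha V0 by auto
  moreover have "int (alpha V E) - 1 \<le> int (card S)" if "maximal_independent V E S" for S
    using card_maximal_independent_ge[OF xy that] alpha by linarith
  ultimately show ?thesis
    using S0(1) by (intro almost_well_coveredI)
qed

lemma alpha_V0_edge:
  assumes "V0 = {a, b}" "E a b"
  shows "alpha V0 (induced V0 E) = 1"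
proof (rule antisym)
  obtain M where M: "M \<subseteq> V0" "independent V E M" "card M = alpha V0 (induced V0 E)"
    by (rule alpha_V0_attained)
  have "\<not> (a \<in> M \<and> b \<in> M)"
    using independent_nonadj[OF M(2)] assms(2) by blast
  then have "\<forall>m\<in>M. \<forall>m'\<in>M. m = m'"
    using M(1) assms(1) by auto
  moreover have "finite M"
    using M(1) finite_V0 finite_subset by blast
  ultimately show "alpha V0 (induced V0 E) \<le> 1"
    using M(3) card_le_Suc0_iff_eq by fastforce
  have "{a} \<subseteq> V0" "independent V E {a}"
    using assms V0_subset adj_irrefl unfolding independent_def by auto
  from alpha_V0_ge[OF this] show "1 \<le> alpha V0 (induced V0 E)"
    by simp
qed

text \<open>A maximal independent set avoiding the G_0-edge ab must dominate a and b by their outer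
  neighbours, which by the 6-cycle are adjacent to x and y; so it contains neither x nor y.\<close>

lemma awc_if_V0_edge:
  assumes xy: "E x y" and V0: "V0 = {a, b}" and ab: "E a b"
    and not_type2: "\<forall>v \<in> V0. \<not> E x v \<and> \<not> E y v"
    and deg: "degree V E a = 2" "degree V E b = 2"
    and cyc: "is_induced_cycle V E cs" "length cs = 6" "{a, b, x, y} \<subseteq> set cs"
  shows "almost_well_covered V E"
proof -
  have nonadj: "\<not> E x a" "\<not> E x b" "\<not> E y a" "\<not> E y b"
    using not_type2 V0 by auto
  have dist: "distinct [a, b, x, y]"
    using V0 ab adj_irrefl type2_not_V0 type2_distinct by auto
  have "is_cycle V E cs"
    using cyc(1) unfolding is_induced_cycle_def by blast
  obtain ta tb where Na: "\<forall>t. E a t \<longrightarrow> t = b \<or> t = ta" and Nb: "\<forall>t. E b t \<longrightarrow> t = a \<or> t = tb"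
    and type2_adj: "E x ta \<or> E x tb" "E y ta \<or> E y tb"
    by (rule six_cycle_through_edge[OF ab deg nonadj dist \<open>is_cycle V E cs\<close> cyc(2,3)])
  have alpha: "int (alpha V E) = int (card Leaves) + 1"
    using alpha_eq alpha_V0_edge[OF V0 ab] by simp
  have "independent V E {a, x}"
    using V0 V0_subset type2_internal adj_irrefl adj_sym \<open>\<not> E x a\<close> unfolding independent_def by auto
  then obtain S0 where S0: "maximal_independent V E S0" "{a, x} \<subseteq> S0"
    by (rule maximal_independent_extends)
  then have "y \<notin> S0" "b \<notin> S0"
    using independent_nonadj[OF maximal_independentD[OF S0(1)]] xy ab by blast+
  with S0 V0 have "int (card S0) = int (alpha V E) - 1"
    using card_maximal_independent[OF S0(1)] alpha by (simp add: Int_insert_right)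
  moreover have "int (alpha V E) - 1 \<le> int (card S)" if S: "maximal_independent V E S" for S
  proof (cases "S \<inter> V0 = {}")
    case False
    then have "1 \<le> card (S \<inter> V0)"
      using finite_V0 by (simp add: Suc_le_eq card_gt_0_iff)
    then show ?thesis
      using card_maximal_independent_ge[OF xy S] alpha by linarith
  next
    case True
    then have "a \<notin> S" "b \<notin> S"
      using V0 by auto
    moreover have "a \<in> V" "b \<in> V"
      using V0 V0_subset by auto
    ultimately have "ta \<in> S" "tb \<in> S"
      using maximal_independent_dominates[OF S] Na Nb by metis+
    then have "x \<notin> S" "y \<notin> S"
      using type2_adj independent_nonadj[OF maximal_independentD[OF S]] by metis+
    then show ?thesis
      using card_maximal_independent[OF S] True alpha by simp
  qed
  ultimately show ?thesis
    using S0(1) by (intro almost_well_coveredI)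
qed

end

theorem theorem14:
  fixes V :: "'a set" and E :: "'a \<Rightarrow> 'a \<Rightarrow> bool" and x y :: 'a
  assumes "graph V E"
    and "connected_graph V E"
    and "girth V E \<ge> 6"
    and "x \<noteq> y"
    and "type_vertices V E 2 = {x, y}"
    and "\<forall>v k. has_type V E v k \<longrightarrow> k \<le> 2"
  shows "almost_well_covered V E \<longleftrightarrow>
    E x y \<and>
    (type_vertices V E 0 = {} \<or>
     (\<exists>a b. a \<noteq> b \<and> type_vertices V E 0 = {a, b} \<and> E a b \<and>
        (\<forall>v \<in> type_vertices V E 0. \<not> E x v \<and> \<not> E y v) \<and>
        degree V E a = 2 \<and> degree V E b = 2 \<and>
        (\<exists>cs. is_induced_cycle V E cs \<and> length cs = 6 \<and> {a, b, x, y} \<subseteq> set cs)))"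
proof -
  interpret girth6_type2_pair V E x y
    using assms by unfold_locales
  show ?thesis
    unfolding V0_def[symmetric]
  proof
    assume "almost_well_covered V E"
    then show "E x y \<and> (V0 = {} \<or> (\<exists>a b. a \<noteq> b \<and> V0 = {a, b} \<and> E a b \<and>
        (\<forall>v \<in> V0. \<not> E x v \<and> \<not> E y v) \<and> degree V E a = 2 \<and> degree V E b = 2 \<and>
        (\<exists>cs. is_induced_cycle V E cs \<and> length cs = 6 \<and> {a, b, x, y} \<subseteq> set cs)))"
      using awc_type2_adjacent awc_V0_nonempty by blast
  qed (use awc_if_V0_empty awc_if_V0_edge in blast)
qed

end
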